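(* Let $n>1$ and let $(G,\sigma)$ be a vertex-colored graph with $V=V(G)$. Let $G+x$ be obtained by adding a new vertex $x\notin V$ adjacent to all vertices of $V$, and let $\sigma'$ be the coloring of $V\cup\{x\}$ with $\sigma'(v)=\sigma(v)$ for $v\in V$ and $\sigma'(x)\neq\sigma(v)$ for all $v\in V$. Then $(G,\sigma)$ is an $(n-1)$-RBMG if and only if $(G+x,\sigma')$ is an $n$-RBMG.
   Context: All graphs are finite, simple and undirected. A vertex coloring is a surjective map $\sigma:V\to S$; properly colored means adjacent vertices get distinct colors. A phylogenetic tree $T$ on $L$ is a rooted tree with leaf set $L$ whose inner vertices other than the root have degree at least three; $u\preceq_T v$ means $v$ lies on the root-to-$u$ path; $\mathrm{lca}_T$ is last common ancestor. For surjective $\sigma:L\to S$, $y$ is a best match of $x$ if $\sigma(x)\neq\sigma(y)$ and $\mathrm{lca}_T(x,y)\preceq_T\mathrm{lca}_T(x,y')$ for all $y'$ with $\sigma(y')=\sigma(y)$; $G(T,\sigma)$ is the graph on $L$ whose edges are the reciprocal best match pairs. A properly colored $(G,\sigma)$ is an RBMG if $G(T,\sigma)=(G,\sigma)$ for some leaf-colored phylogenetic tree $(T,\sigma)$; it is an $n$-RBMG if moreover exactly $n$ colors are used. *)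

theory Defs
  imports Main
begin

definition simple_graph :: "'a set \<Rightarrow> ('a \<times> 'a) set \<Rightarrow> bool" where
  "simple_graph V E \<longleftrightarrow> finite V \<and> E \<subseteq> V \<times> V \<and> sym E \<and> irrefl E"

definition properly_colored :: "'a set \<Rightarrow> ('a \<times> 'a) set \<Rightarrow> ('a \<Rightarrow> 'c) \<Rightarrow> bool" where
  "properly_colored V E \<sigma> \<longleftrightarrow> (\<forall>u v. (u, v) \<in> E \<longrightarrow> \<sigma> u \<noteq> \<sigma> v)"

definition rooted_tree :: "'v set \<Rightarrow> ('v \<times> 'v) set \<Rightarrow> 'v \<Rightarrow> bool" where
  "rooted_tree VT ET \<rho> \<longleftrightarrow> finite VT \<and> \<rho> \<in> VT \<and> ET \<subseteq> VT \<times> VT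
     \<and> (\<forall>p. (p, \<rho>) \<notin> ET)
     \<and> (\<forall>v\<in>VT. v \<noteq> \<rho> \<longrightarrow> (\<exists>!p. (p, v) \<in> ET))
     \<and> (\<forall>v\<in>VT. (\<rho>, v) \<in> ET\<^sup>*)"

definition children :: "('v \<times> 'v) set \<Rightarrow> 'v \<Rightarrow> 'v set" where
  "children ET v = {w. (v, w) \<in> ET}"

definition leaves :: "'v set \<Rightarrow> ('v \<times> 'v) set \<Rightarrow> 'v set" where
  "leaves VT ET = {v \<in> VT. children ET v = {}}"

text \<open>Degree in the underlying undirected tree.\<close>
definition tdeg :: "('v \<times> 'v) set \<Rightarrow> 'v \<Rightarrow> 'v \<Rightarrow> nat" where
  "tdeg ET \<rho> v = card (children ET v) + (if v = \<rho> then 0 else 1)"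

definition phylo_tree :: "'v set \<Rightarrow> ('v \<times> 'v) set \<Rightarrow> 'v \<Rightarrow> 'v set \<Rightarrow> bool" where
  "phylo_tree VT ET \<rho> L \<longleftrightarrow> rooted_tree VT ET \<rho> \<and> leaves VT ET = L
     \<and> (\<forall>v\<in>VT. v \<notin> L \<and> v \<noteq> \<rho> \<longrightarrow> tdeg ET \<rho> v \<ge> 3)"

definition anc_le :: "('v \<times> 'v) set \<Rightarrow> 'v \<Rightarrow> 'v \<Rightarrow> bool" where
  "anc_le ET u v \<longleftrightarrow> (v, u) \<in> ET\<^sup>*"

definition lca :: "'v set \<Rightarrow> ('v \<times> 'v) set \<Rightarrow> 'v \<Rightarrow> 'v \<Rightarrow> 'v" where
  "lca VT ET x y = (THE w. w \<in> VT \<and> anc_le ET x w \<and> anc_le ET y w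
       \<and> (\<forall>w'\<in>VT. anc_le ET x w' \<and> anc_le ET y w' \<longrightarrow> anc_le ET w w'))"

definition best_match :: "'v set \<Rightarrow> ('v \<times> 'v) set \<Rightarrow> 'v set \<Rightarrow> ('v \<Rightarrow> 'c) \<Rightarrow> 'v \<Rightarrow> 'v \<Rightarrow> bool" where
  "best_match VT ET L \<tau> x y \<longleftrightarrow> x \<in> L \<and> y \<in> L \<and> \<tau> x \<noteq> \<tau> y
     \<and> (\<forall>y'\<in>L. \<tau> y' = \<tau> y \<longrightarrow> anc_le ET (lca VT ET x y) (lca VT ET x y'))"

definition reciprocal_best_match :: "'v set \<Rightarrow> ('v \<times> 'v) set \<Rightarrow> 'v set \<Rightarrow> ('v \<Rightarrow> 'c) \<Rightarrow> 'v \<Rightarrow> 'v \<Rightarrow> bool" where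
  "reciprocal_best_match VT ET L \<tau> x y \<longleftrightarrow> best_match VT ET L \<tau> x y \<and> best_match VT ET L \<tau> y x"

text \<open>Trees explaining a graph on vertex set V (of type 'a) have vertex type 'a + nat:
  the leaves are the copies Inl v of the graph vertices, the inner vertices are Inr k.
  Since trees are finite, every leaf-labelled tree on V is isomorphic to such a tree.\<close>
definition RBMG :: "'a set \<Rightarrow> ('a \<times> 'a) set \<Rightarrow> ('a \<Rightarrow> 'c) \<Rightarrow> bool" where
  "RBMG V E \<sigma> \<longleftrightarrow> simple_graph V E \<and> properly_colored V E \<sigma> \<and>
     (\<exists>(VT :: ('a + nat) set) ET \<rho>. phylo_tree VT ET \<rho> (Inl ` V) \<and>
        (\<forall>u\<in>V. \<forall>v\<in>V. (u, v) \<in> E \<longleftrightarrow>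
            reciprocal_best_match VT ET (Inl ` V) (case_sum \<sigma> (\<lambda>_. undefined)) (Inl u) (Inl v)))"

definition n_RBMG :: "nat \<Rightarrow> 'a set \<Rightarrow> ('a \<times> 'a) set \<Rightarrow> ('a \<Rightarrow> 'c) \<Rightarrow> bool" where
  "n_RBMG n V E \<sigma> \<longleftrightarrow> RBMG V E \<sigma> \<and> card (\<sigma> ` V) = n"

end

theory Submission
  imports Defs
begin

text \<open>
  Best matches between leaves are determined by the colouring together with the relative order
  of last common ancestors. Given a tree explaining (G, \<sigma>), hang x as a new leaf directly
  below the root (after giving the tree an inner root if it consists of a single leaf): the
  lcas of the old leaves are unchanged, and lca(x, v) is the root for every v, so x, whose
  colour occurs nowhere else, is a reciprocal best match of every vertex. Conversely, deleting
  the leaf x from a tree explaining G + x, and suppressing its parent if that is left with a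
  single child, does not change the lcas of the remaining leaves; since the colour of x is
  unique, the best matches within V stay the same.
\<close>

section \<open>Rooted trees\<close>

locale rtree =
  fixes VT :: "'v set" and ET :: "('v \<times> 'v) set" and \<rho> :: 'v
  assumes rooted: "rooted_tree VT ET \<rho>"
begin

lemma finite_VT: "finite VT"
  and root_in_VT: "\<rho> \<in> VT"
  and edges_subset: "ET \<subseteq> VT \<times> VT"
  and root_no_parent: "(p, \<rho>) \<notin> ET"
  and parent_exists: "v \<in> VT \<Longrightarrow> v \<noteq> \<rho> \<Longrightarrow> \<exists>p. (p, v) \<in> ET"
  and reachable: "v \<in> VT \<Longrightarrow> (\<rho>, v) \<in> ET\<^sup>*"
  using rooted unfolding rooted_tree_def by blast+

lemma edge_in_VT: "(a, b) \<in> ET \<Longrightarrow> a \<in> VT \<and> b \<in> VT"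
  using edges_subset by blast

lemma parent_unique: "(p, v) \<in> ET \<Longrightarrow> (p', v) \<in> ET \<Longrightarrow> p = p'"
  using rooted edge_in_VT root_no_parent unfolding rooted_tree_def by metis

lemma children_subset: "children ET v \<subseteq> VT"
  unfolding children_def using edges_subset by auto

lemma finite_children: "finite (children ET v)"
  using children_subset finite_VT finite_subset by blast

text \<open>By uniqueness of parents, a cycle through v would contain the whole path from the root to v,
  in particular an edge into the root.\<close>
lemma trancl_irrefl: "(v, v) \<notin> ET\<^sup>+"
proof
  assume cycle: "(v, v) \<in> ET\<^sup>+"
  then have "(\<rho>, v) \<in> ET\<^sup>*"
    using reachable edge_in_VT by (metis tranclE)
  then show False using cycle
  proof (induction rule: rtrancl_induct)
    case base
    then show ?case using root_no_parent by (metis tranclE)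
  next
    case (step u v)
    from step.prems show ?case
    proof (cases rule: tranclE)
      case base
      then show ?thesis using parent_unique step.hyps(2) step.IH by blast
    next
      case (step c)
      then have "c = u" using parent_unique \<open>(u, v) \<in> ET\<close> by blast
      then have "(u, u) \<in> ET\<^sup>+" using step \<open>(u, v) \<in> ET\<close>
        by (meson trancl.trancl_into_trancl trancl_into_trancl2)
      then show ?thesis using step.IH by blast
    qed
  qed
qed

lemma ancestor_antisym: "(a, b) \<in> ET\<^sup>* \<Longrightarrow> (b, a) \<in> ET\<^sup>* \<Longrightarrow> a = b"
  by (metis trancl_irrefl rtrancl_eq_or_trancl rtrancl_trancl_trancl)

lemma ancestors_linear:
  "(w, a) \<in> ET\<^sup>* \<Longrightarrow> (u, a) \<in> ET\<^sup>* \<Longrightarrow> (u, w) \<in> ET\<^sup>* \<or> (w, u) \<in> ET\<^sup>*"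
proof (induction arbitrary: u rule: rtrancl_induct)
  case base
  then show ?case by blast
next
  case (step y z)
  show ?case
  proof (cases "u = z")
    case True
    then show ?thesis using step by (meson rtrancl.rtrancl_into_rtrancl)
  next
    case False
    then obtain y' where "(u, y') \<in> ET\<^sup>*" "(y', z) \<in> ET"
      using step.prems by (metis rtranclE)
    then have "y' = y" using parent_unique step.hyps(2) by blast
    then show ?thesis using step.IH \<open>(u, y') \<in> ET\<^sup>*\<close> by blast
  qed
qed

lemma ancestor_of_root: "(a, \<rho>) \<in> ET\<^sup>* \<Longrightarrow> a = \<rho>"
  by (metis root_no_parent rtranclE)

lemma ancestor_of_parent: "(w, v) \<in> ET\<^sup>* \<Longrightarrow> w \<noteq> v \<Longrightarrow> (p, v) \<in> ET \<Longrightarrow> (w, p) \<in> ET\<^sup>*"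
  by (metis parent_unique rtranclE)

lemma descendant_via_child:
  "(v, a) \<in> ET\<^sup>* \<Longrightarrow> a \<noteq> v \<Longrightarrow> \<exists>d\<in>children ET v. (d, a) \<in> ET\<^sup>*"
  unfolding children_def by (metis converse_rtranclE mem_Collect_eq)

lemma descendant_of_leaf: "children ET z = {} \<Longrightarrow> (z, a) \<in> ET\<^sup>* \<Longrightarrow> a = z"
  by (metis children_def converse_rtranclE empty_iff mem_Collect_eq)

lemma childless_root: "children ET \<rho> = {} \<Longrightarrow> VT = {\<rho>}"
  using reachable descendant_of_leaf root_in_VT by blast

lemma root_with_leaf_child:
  assumes "children ET \<rho> = {z}" "children ET z = {}"
  shows "VT \<subseteq> {\<rho>, z}"
proof
  fix v assume v: "v \<in> VT"
  show "v \<in> {\<rho>, z}"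
  proof (cases "v = \<rho>")
    case False
    then have "(z, v) \<in> ET\<^sup>*"
      using descendant_via_child reachable v assms(1) by fastforce
    then show ?thesis using descendant_of_leaf assms(2) by blast
  qed simp
qed

definition is_lca :: "'v \<Rightarrow> 'v \<Rightarrow> 'v \<Rightarrow> bool" where
  "is_lca a b w \<longleftrightarrow> w \<in> VT \<and> anc_le ET a w \<and> anc_le ET b w
       \<and> (\<forall>w'\<in>VT. anc_le ET a w' \<and> anc_le ET b w' \<longrightarrow> anc_le ET w w')"

lemma is_lca_unique: "is_lca a b w1 \<Longrightarrow> is_lca a b w2 \<Longrightarrow> w1 = w2"
  unfolding is_lca_def anc_le_def using ancestor_antisym by blast

text \<open>The common ancestors of a and b form a chain, so the one with the most ancestors is
  their last common ancestor.\<close>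
lemma is_lca_exists:
  assumes "a \<in> VT" "b \<in> VT"
  shows "\<exists>w. is_lca a b w"
proof -
  define C where "C = {w\<in>VT. (w, a) \<in> ET\<^sup>* \<and> (w, b) \<in> ET\<^sup>*}"
  define depth where "depth w = card {y\<in>VT. (y, w) \<in> ET\<^sup>*}" for w
  have "finite C" using finite_VT C_def by auto
  moreover have "\<rho> \<in> C" using C_def root_in_VT reachable assms by auto
  ultimately obtain w where wC: "w \<in> C" and deepest: "depth w = Max (depth ` C)"
    using Max_in[of "depth ` C"] by (metis empty_iff finite_imageI image_iff)
  have "(w', w) \<in> ET\<^sup>*" if w'C: "w' \<in> C" for w'
  proof (rule ccontr)
    assume "(w', w) \<notin> ET\<^sup>*"
    moreover have "(w, w') \<in> ET\<^sup>* \<or> (w', w) \<in> ET\<^sup>*"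
      using ancestors_linear w'C wC C_def by blast
    ultimately have "{y\<in>VT. (y, w) \<in> ET\<^sup>*} \<subset> {y\<in>VT. (y, w') \<in> ET\<^sup>*}"
      using w'C C_def by auto
    then have "depth w < depth w'"
      unfolding depth_def using finite_VT by (simp add: psubset_card_mono)
    moreover have "depth w' \<le> depth w" using deepest w'C \<open>finite C\<close> by simp
    ultimately show False by simp
  qed
  then have "is_lca a b w" using wC unfolding is_lca_def anc_le_def C_def by blast
  then show ?thesis by blast
qed

lemma lca_eqI: "is_lca a b w \<Longrightarrow> lca VT ET a b = w"
  unfolding lca_def is_lca_def[symmetric] using is_lca_unique by blast

lemma is_lca_lca: "a \<in> VT \<Longrightarrow> b \<in> VT \<Longrightarrow> is_lca a b (lca VT ET a b)"
  using is_lca_exists lca_eqI by blast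

lemma lca_in_VT: "a \<in> VT \<Longrightarrow> b \<in> VT \<Longrightarrow> lca VT ET a b \<in> VT"
  using is_lca_lca unfolding is_lca_def by blast

lemma lca_ne_leaf:
  assumes "children ET z = {}" "a \<in> VT" "b \<in> VT" "a \<noteq> z"
  shows "lca VT ET a b \<noteq> z"
  using is_lca_lca[OF assms(2,3)] descendant_of_leaf[OF assms(1)] assms(4)
  unfolding is_lca_def anc_le_def by blast

lemma lca_leaf_child_of_root:
  assumes "(\<rho>, z) \<in> ET" "children ET z = {}" "a \<in> VT" "a \<noteq> z"
  shows "lca VT ET z a = \<rho>"
proof (rule lca_eqI)
  have "(w, \<rho>) \<in> ET\<^sup>*" if "(w, z) \<in> ET\<^sup>*" "(w, a) \<in> ET\<^sup>*" for w
  proof -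
    have "w \<noteq> z" using that(2) descendant_of_leaf assms(2,4) by blast
    then show ?thesis using ancestor_of_parent that(1) assms(1) by blast
  qed
  then show "is_lca z a \<rho>"
    unfolding is_lca_def anc_le_def
    using ancestor_of_root root_in_VT reachable assms edge_in_VT by blast
qed

end

section \<open>Best matches and the order of last common ancestors\<close>

definition lca_le :: "'v set \<Rightarrow> ('v \<times> 'v) set \<Rightarrow> 'v \<Rightarrow> 'v \<Rightarrow> 'v \<Rightarrow> bool" where
  "lca_le VT ET x y y' \<longleftrightarrow> anc_le ET (lca VT ET x y) (lca VT ET x y')"

lemma best_match_iff_lca_le:
  "best_match VT ET L \<tau> x y \<longleftrightarrow>
     x \<in> L \<and> y \<in> L \<and> \<tau> x \<noteq> \<tau> y \<and> (\<forall>y'\<in>L. \<tau> y' = \<tau> y \<longrightarrow> lca_le VT ET x y y')"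
  unfolding best_match_def lca_le_def ..

lemma best_match_transfer:
  assumes "L \<subseteq> L'" and "\<forall>a\<in>L. \<tau>' a = \<tau> a" and "\<forall>y\<in>L' - L. \<tau>' y \<notin> \<tau> ` L"
    and "\<forall>a\<in>L. \<forall>b\<in>L. \<forall>c\<in>L. lca_le VT' ET' a b c \<longleftrightarrow> lca_le VT ET a b c"
    and "a \<in> L" "b \<in> L"
  shows "best_match VT' ET' L' \<tau>' a b \<longleftrightarrow> best_match VT ET L \<tau> a b"
proof -
  have colours: "\<tau>' a = \<tau> a" "\<tau>' b = \<tau> b" using assms(2,5,6) by auto
  have old: "y \<in> L" if "y \<in> L'" "\<tau>' y = \<tau> b" for y
    using that assms(3,6) by (metis DiffI imageI)
  have "(\<forall>y\<in>L'. \<tau>' y = \<tau>' b \<longrightarrow> lca_le VT' ET' a b y) \<longleftrightarrow>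
      (\<forall>y\<in>L. \<tau> y = \<tau> b \<longrightarrow> lca_le VT ET a b y)"
  proof (intro iffI ballI impI)
    fix y assume new: "\<forall>y\<in>L'. \<tau>' y = \<tau>' b \<longrightarrow> lca_le VT' ET' a b y"
      and y: "y \<in> L" "\<tau> y = \<tau> b"
    have "y \<in> L'" "\<tau>' y = \<tau>' b" using y colours assms(1,2) by auto
    then have "lca_le VT' ET' a b y" using new by blast
    then show "lca_le VT ET a b y" using assms(4-6) y(1) by simp
  next
    fix y assume old_matches: "\<forall>y\<in>L. \<tau> y = \<tau> b \<longrightarrow> lca_le VT ET a b y"
      and y: "y \<in> L'" "\<tau>' y = \<tau>' b"
    have "y \<in> L" using old y colours by simp
    then have "\<tau> y = \<tau> b" using y colours assms(2) by simp
    then have "lca_le VT ET a b y" using old_matches \<open>y \<in> L\<close> by blast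
    then show "lca_le VT' ET' a b y" using assms(4-6) \<open>y \<in> L\<close> by simp
  qed
  then show ?thesis
    unfolding best_match_iff_lca_le using colours assms(1,5,6) by auto
qed

lemma reciprocal_best_match_transfer:
  assumes "L \<subseteq> L'" and "\<forall>a\<in>L. \<tau>' a = \<tau> a" and "\<forall>y\<in>L' - L. \<tau>' y \<notin> \<tau> ` L"
    and "\<forall>a\<in>L. \<forall>b\<in>L. \<forall>c\<in>L. lca_le VT' ET' a b c \<longleftrightarrow> lca_le VT ET a b c"
    and "a \<in> L" "b \<in> L"
  shows "reciprocal_best_match VT' ET' L' \<tau>' a b \<longleftrightarrow> reciprocal_best_match VT ET L \<tau> a b"
  unfolding reciprocal_best_match_def using best_match_transfer[OF assms(1-4)] assms(5,6) by blast

lemma reciprocal_best_match_unique_colour: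
  assumes "a \<in> L" "z \<in> L" "a \<noteq> z" and unique: "\<forall>y\<in>L. \<tau> y = \<tau> z \<longrightarrow> y = z"
    and lca_const: "\<forall>y\<in>L - {z}. lca VT ET z y = r"
  shows "reciprocal_best_match VT ET L \<tau> a z" "reciprocal_best_match VT ET L \<tau> z a"
proof -
  have "\<tau> a \<noteq> \<tau> z" using assms(1,3) unique by blast
  moreover have "(lca VT ET a y, lca VT ET a z) \<in> ET\<^sup>*" if "y \<in> L" "\<tau> y = \<tau> z" for y
    using unique that by (metis rtrancl.rtrancl_refl)
  moreover have "(lca VT ET z y, lca VT ET z a) \<in> ET\<^sup>*" if "y \<in> L" "\<tau> y = \<tau> a" for y
  proof -
    have "y \<noteq> z" using that \<open>\<tau> a \<noteq> \<tau> z\<close> by auto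
    then show ?thesis using lca_const that(1) assms(1,3) by simp
  qed
  ultimately show "reciprocal_best_match VT ET L \<tau> a z" "reciprocal_best_match VT ET L \<tau> z a"
    unfolding reciprocal_best_match_def best_match_def anc_le_def using assms(1,2) by auto
qed

lemma lca_order_embedding:
  assumes T1: "rtree VT1 ET1 \<rho>1" and T2: "rtree VT2 ET2 \<rho>2"
    and f_VT: "f ` VT1 \<subseteq> VT2"
    and f_order: "\<And>a b. a \<in> VT1 \<Longrightarrow> b \<in> VT1 \<Longrightarrow> (f a, f b) \<in> ET2\<^sup>* \<longleftrightarrow> (a, b) \<in> ET1\<^sup>*"
    and ab: "a \<in> VT1" "b \<in> VT1" and lca_in: "lca VT2 ET2 (f a) (f b) \<in> f ` VT1"
  shows "lca VT2 ET2 (f a) (f b) = f (lca VT1 ET1 a b)"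
proof -
  define w where "w = lca VT1 ET1 a b"
  obtain u where u: "u \<in> VT1" "lca VT2 ET2 (f a) (f b) = f u" using lca_in by blast
  have fab: "f a \<in> VT2" "f b \<in> VT2" using f_VT ab by auto
  have "(f u, f a) \<in> ET2\<^sup>*" "(f u, f b) \<in> ET2\<^sup>*"
    using rtree.is_lca_lca[OF T2 fab] u(2) unfolding rtree.is_lca_def[OF T2] anc_le_def by auto
  then have "(u, a) \<in> ET1\<^sup>*" "(u, b) \<in> ET1\<^sup>*" using f_order u(1) ab by auto
  then have uw: "(u, w) \<in> ET1\<^sup>*"
    using rtree.is_lca_lca[OF T1 ab] u(1)
    unfolding w_def rtree.is_lca_def[OF T1] anc_le_def by blast
  have wV: "w \<in> VT1" and "(w, a) \<in> ET1\<^sup>*" "(w, b) \<in> ET1\<^sup>*"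
    using rtree.is_lca_lca[OF T1 ab] unfolding w_def rtree.is_lca_def[OF T1] anc_le_def by auto
  then have "(f w, f a) \<in> ET2\<^sup>*" "(f w, f b) \<in> ET2\<^sup>*" using f_order ab by auto
  then have "(f w, f u) \<in> ET2\<^sup>*"
    using rtree.is_lca_lca[OF T2 fab] u(2) f_VT wV
    unfolding rtree.is_lca_def[OF T2] anc_le_def by auto
  then have "(w, u) \<in> ET1\<^sup>*" using f_order wV u(1) by auto
  then show ?thesis using rtree.ancestor_antisym[OF T1 uw] u(2) w_def by simp
qed

lemma lca_le_order_embedding:
  assumes T1: "rtree VT1 ET1 \<rho>1" and T2: "rtree VT2 ET2 \<rho>2"
    and f_VT: "f ` VT1 \<subseteq> VT2"
    and f_order: "\<And>a b. a \<in> VT1 \<Longrightarrow> b \<in> VT1 \<Longrightarrow> (f a, f b) \<in> ET2\<^sup>* \<longleftrightarrow> (a, b) \<in> ET1\<^sup>*"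
    and L: "L \<subseteq> VT1" and lca_in: "\<And>a b. a \<in> L \<Longrightarrow> b \<in> L \<Longrightarrow> lca VT2 ET2 (f a) (f b) \<in> f ` VT1"
  shows "\<forall>a\<in>L. \<forall>b\<in>L. \<forall>c\<in>L. lca_le VT2 ET2 (f a) (f b) (f c) \<longleftrightarrow> lca_le VT1 ET1 a b c"
proof (intro ballI)
  fix a b c assume abc: "a \<in> L" "b \<in> L" "c \<in> L"
  then have "lca VT2 ET2 (f a) (f b) = f (lca VT1 ET1 a b)"
    and "lca VT2 ET2 (f a) (f c) = f (lca VT1 ET1 a c)"
    using lca_order_embedding[OF T1 T2 f_VT f_order] lca_in L by (auto simp: subset_iff)
  then show "lca_le VT2 ET2 (f a) (f b) (f c) \<longleftrightarrow> lca_le VT1 ET1 a b c"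
    unfolding lca_le_def anc_le_def using f_order rtree.lca_in_VT[OF T1] abc L
    by (auto simp: subset_iff)
qed

lemma lca_le_subtree:
  assumes T1: "rtree VT1 ET1 \<rho>1" and T2: "rtree VT2 ET2 \<rho>2" and "VT1 \<subseteq> VT2"
    and "\<And>a b. a \<in> VT1 \<Longrightarrow> b \<in> VT1 \<Longrightarrow> (a, b) \<in> ET2\<^sup>* \<longleftrightarrow> (a, b) \<in> ET1\<^sup>*"
    and "L \<subseteq> VT1" and "\<And>a b. a \<in> L \<Longrightarrow> b \<in> L \<Longrightarrow> lca VT2 ET2 a b \<in> VT1"
  shows "\<forall>a\<in>L. \<forall>b\<in>L. \<forall>c\<in>L. lca_le VT2 ET2 a b c \<longleftrightarrow> lca_le VT1 ET1 a b c"
  using lca_le_order_embedding[OF T1 T2, of id L] assms(3-6) by auto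

lemma lca_le_refl: "lca_le VT ET x y y"
  unfolding lca_le_def anc_le_def by simp

section \<open>Operations on rooted trees\<close>

lemma rtrancl_map_prod_image: "(a, b) \<in> R\<^sup>* \<Longrightarrow> (h a, h b) \<in> (map_prod h h ` R)\<^sup>*"
proof (induction rule: rtrancl_induct)
  case (step y z)
  then have "(h y, h z) \<in> map_prod h h ` R" by force
  with step.IH show ?case by (rule rtrancl.rtrancl_into_rtrancl)
qed simp

context rtree
begin

lemma rtrancl_image_iff:
  assumes inj: "inj_on f VT" and "a \<in> VT" "b \<in> VT"
  shows "(f a, f b) \<in> (map_prod f f ` ET)\<^sup>* \<longleftrightarrow> (a, b) \<in> ET\<^sup>*"
proof
  define g where "g = inv_into VT f"
  have gf: "g (f v) = v" if "v \<in> VT" for v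
    using inj that g_def by simp
  have "map_prod g g ` map_prod f f ` ET = ET"
  proof (rule set_eqI)
    fix e :: "'v \<times> 'v"
    obtain x y where e: "e = (x, y)" by (cases e)
    have "e \<in> map_prod g g ` map_prod f f ` ET \<longleftrightarrow>
        (\<exists>x' y'. (x', y') \<in> ET \<and> x = g (f x') \<and> y = g (f y'))"
      unfolding e by force
    also have "\<dots> \<longleftrightarrow> e \<in> ET"
      unfolding e using gf edge_in_VT by (metis (no_types, lifting))
    finally show "e \<in> map_prod g g ` map_prod f f ` ET \<longleftrightarrow> e \<in> ET" .
  qed
  moreover assume "(f a, f b) \<in> (map_prod f f ` ET)\<^sup>*"
  ultimately have "(g (f a), g (f b)) \<in> ET\<^sup>*"
    using rtrancl_map_prod_image[of "f a" "f b" "map_prod f f ` ET" g] by simp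
  then show "(a, b) \<in> ET\<^sup>*" using gf assms(2,3) by simp
qed (rule rtrancl_map_prod_image)

lemma children_image:
  assumes inj: "inj_on f VT" and v: "v \<in> VT"
  shows "children (map_prod f f ` ET) (f v) = f ` children ET v"
proof (rule set_eqI)
  fix w
  show "w \<in> children (map_prod f f ` ET) (f v) \<longleftrightarrow> w \<in> f ` children ET v"
  proof
    assume "w \<in> children (map_prod f f ` ET) (f v)"
    then obtain a u where e: "(a, u) \<in> ET" "f a = f v" "w = f u"
      unfolding children_def by auto
    then have "a = v" using inj_onD[OF inj] edge_in_VT v by blast
    then show "w \<in> f ` children ET v" using e unfolding children_def by blast
  next
    assume "w \<in> f ` children ET v"
    then obtain u where "(v, u) \<in> ET" "w = f u" unfolding children_def by blast
    then show "w \<in> children (map_prod f f ` ET) (f v)"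
      unfolding children_def using image_eqI[of "(f v, w)" "map_prod f f" "(v, u)" ET] by simp
  qed
qed

lemma rtree_image:
  assumes inj: "inj_on f VT"
  shows "rtree (f ` VT) (map_prod f f ` ET) (f \<rho>)"
  unfolding rtree_def rooted_tree_def
proof (intro conjI ballI impI allI)
  show "finite (f ` VT)" "f \<rho> \<in> f ` VT" "map_prod f f ` ET \<subseteq> f ` VT \<times> f ` VT"
    using finite_VT root_in_VT edges_subset by auto
next
  fix p show "(p, f \<rho>) \<notin> map_prod f f ` ET"
  proof
    assume "(p, f \<rho>) \<in> map_prod f f ` ET"
    then obtain a u where e: "(a, u) \<in> ET" "f u = f \<rho>" by auto
    then have "u = \<rho>" using inj_onD[OF inj] edge_in_VT root_in_VT by blast
    then show False using e root_no_parent by blast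
  qed
next
  fix v' assume "v' \<in> f ` VT" "v' \<noteq> f \<rho>"
  then obtain v where v: "v \<in> VT" "v' = f v" "v \<noteq> \<rho>" by blast
  then obtain p where p: "(p, v) \<in> ET" using parent_exists by blast
  show "\<exists>!p. (p, v') \<in> map_prod f f ` ET"
  proof (rule ex1I[of _ "f p"])
    show "(f p, v') \<in> map_prod f f ` ET"
      using image_eqI[of "(f p, v')" "map_prod f f" "(p, v)" ET] p v(2) by simp
  next
    fix p' assume "(p', v') \<in> map_prod f f ` ET"
    then obtain a u where e: "(a, u) \<in> ET" "f u = f v" "p' = f a" using v(2) by auto
    then have "u = v" using inj_onD[OF inj] edge_in_VT v(1) by blast
    then show "p' = f p" using e p parent_unique by blast
  qed
next
  fix v' assume "v' \<in> f ` VT"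
  then obtain v where "v \<in> VT" "v' = f v" by blast
  then show "(f \<rho>, v') \<in> (map_prod f f ` ET)\<^sup>*"
    using rtrancl_map_prod_image[OF reachable] by blast
qed

end

lemma phylo_tree_image:
  assumes P: "phylo_tree VT ET \<rho> L" and inj: "inj_on f VT"
  shows "phylo_tree (f ` VT) (map_prod f f ` ET) (f \<rho>) (f ` L)"
proof -
  interpret rtree VT ET \<rho> using P unfolding phylo_tree_def rtree_def by blast
  have L: "leaves VT ET = L" using P unfolding phylo_tree_def by blast
  have degree: "\<And>v. v \<in> VT \<Longrightarrow> v \<notin> L \<Longrightarrow> v \<noteq> \<rho> \<Longrightarrow> 3 \<le> tdeg ET \<rho> v"
    using P unfolding phylo_tree_def by blast
  have leaf_iff: "children (map_prod f f ` ET) (f v) = {} \<longleftrightarrow> children ET v = {}" if "v \<in> VT" for v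
    using children_image[OF inj that] by simp
  have "leaves (f ` VT) (map_prod f f ` ET) = f ` leaves VT ET"
    unfolding leaves_def using leaf_iff by blast
  moreover have "3 \<le> tdeg (map_prod f f ` ET) (f \<rho>) (f v)"
    if v: "v \<in> VT" "f v \<notin> f ` L" "f v \<noteq> f \<rho>" for v
  proof -
    have "card (children (map_prod f f ` ET) (f v)) = card (children ET v)"
      using children_image[OF inj v(1)] card_image[OF inj_on_subset[OF inj children_subset]] by simp
    moreover have "v \<notin> L" "v \<noteq> \<rho>" using v by auto
    ultimately show ?thesis using degree[OF v(1)] v(3) unfolding tdeg_def by simp
  qed
  moreover have "rooted_tree (f ` VT) (map_prod f f ` ET) (f \<rho>)"
    using rtree_image[OF inj] unfolding rtree_def .
  ultimately show ?thesis unfolding phylo_tree_def L by blast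
qed

lemma rtree_singleton: "rtree {r} {} r"
  unfolding rtree_def rooted_tree_def by simp

lemma children_insert_edge:
  "children (insert (p, z) ET) v = (if v = p then insert z (children ET v) else children ET v)"
  unfolding children_def by auto

context rtree
begin

lemma children_outside: "v \<notin> VT \<Longrightarrow> children ET v = {}"
  using children_def edge_in_VT by fastforce

context
  fixes p z assumes p: "p \<in> VT" and z: "z \<notin> VT"
begin

lemma rtrancl_add_leaf_cases:
  assumes "(a, y) \<in> (insert (p, z) ET)\<^sup>*" "a \<in> VT"
  shows "(y \<in> VT \<and> (a, y) \<in> ET\<^sup>*) \<or> (y = z \<and> (a, p) \<in> ET\<^sup>*)"
  using assms
proof (induction rule: rtrancl_induct)
  case (step y d)
  from step.IH[OF step.prems] show ?case
  proof
    assume y: "y \<in> VT \<and> (a, y) \<in> ET\<^sup>*"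
    show ?case
    proof (cases "(y, d) = (p, z)")
      case False
      then have "(y, d) \<in> ET" using step.hyps(2) by blast
      then show ?thesis using y edge_in_VT by (meson rtrancl.rtrancl_into_rtrancl)
    qed (use y in simp)
  next
    assume "y = z \<and> (a, p) \<in> ET\<^sup>*"
    then have "(z, d) \<in> ET" using step.hyps(2) p z by auto
    then show ?case using edge_in_VT z by blast
  qed
qed simp

lemma rtrancl_add_leaf_iff:
  "a \<in> VT \<Longrightarrow> b \<in> VT \<Longrightarrow> (a, b) \<in> (insert (p, z) ET)\<^sup>* \<longleftrightarrow> (a, b) \<in> ET\<^sup>*"
  using rtrancl_add_leaf_cases z rtrancl_mono[of ET "insert (p, z) ET"] by blast

lemma rtree_add_leaf: "rtree (insert z VT) (insert (p, z) ET) \<rho>"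
  unfolding rtree_def rooted_tree_def
proof (intro conjI ballI impI allI)
  show "finite (insert z VT)" "\<rho> \<in> insert z VT" "insert (p, z) ET \<subseteq> insert z VT \<times> insert z VT"
    using finite_VT root_in_VT edges_subset p by auto
  fix x show "(x, \<rho>) \<notin> insert (p, z) ET" using root_no_parent root_in_VT z by auto
next
  fix v assume v: "v \<in> insert z VT" "v \<noteq> \<rho>"
  show "\<exists>!x. (x, v) \<in> insert (p, z) ET"
  proof (cases "v = z")
    case True
    then show ?thesis using edge_in_VT z by auto
  next
    case False
    then obtain x where "(x, v) \<in> ET" using parent_exists v by auto
    then show ?thesis using False parent_unique by auto
  qed
next
  fix v assume "v \<in> insert z VT"
  moreover have "(\<rho>, p) \<in> (insert (p, z) ET)\<^sup>*"
    using reachable[OF p] rtrancl_mono[of ET "insert (p, z) ET"] by blast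
  ultimately show "(\<rho>, v) \<in> (insert (p, z) ET)\<^sup>*"
    using reachable rtrancl_mono[of ET "insert (p, z) ET"]
    by (auto intro: rtrancl.rtrancl_into_rtrancl)
qed

end

end

abbreviation prune :: "('v \<times> 'v) set \<Rightarrow> 'v \<Rightarrow> ('v \<times> 'v) set" where
  "prune ET z \<equiv> {e \<in> ET. snd e \<noteq> z}"

lemma children_remove_leaf: "children (prune ET z) v = children ET v - {z}"
  unfolding children_def by auto

context rtree
begin

context
  fixes z assumes z: "z \<in> VT" "z \<noteq> \<rho>" and leaf: "children ET z = {}"
begin

lemma rtrancl_remove_leaf_iff:
  assumes "a \<in> VT - {z}" "b \<in> VT - {z}"
  shows "(a, b) \<in> (prune ET z)\<^sup>* \<longleftrightarrow> (a, b) \<in> ET\<^sup>*"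
proof
  assume "(a, b) \<in> ET\<^sup>*"
  then show "(a, b) \<in> (prune ET z)\<^sup>*" using assms(2)
  proof (induction rule: rtrancl_induct)
    case (step y d)
    have "y \<noteq> z" using leaf step.hyps(2) unfolding children_def by blast
    moreover have "y \<in> VT" using step.hyps(2) edge_in_VT by blast
    ultimately show ?case using step by (simp add: rtrancl.rtrancl_into_rtrancl)
  qed simp
qed (use rtrancl_mono[of "prune ET z" ET] in blast)

lemma rtree_remove_leaf: "rtree (VT - {z}) (prune ET z) \<rho>"
  unfolding rtree_def rooted_tree_def
proof (intro conjI ballI impI allI)
  show "finite (VT - {z})" "\<rho> \<in> VT - {z}" "prune ET z \<subseteq> (VT - {z}) \<times> (VT - {z})"
    using finite_VT root_in_VT z edges_subset leaf unfolding children_def by auto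
  fix x show "(x, \<rho>) \<notin> prune ET z" using root_no_parent by auto
next
  fix v assume "v \<in> VT - {z}" "v \<noteq> \<rho>"
  then obtain x where "(x, v) \<in> ET" using parent_exists by blast
  then show "\<exists>!x. (x, v) \<in> prune ET z"
    using parent_unique \<open>v \<in> VT - {z}\<close> by auto
next
  fix v assume "v \<in> VT - {z}"
  then show "(\<rho>, v) \<in> (prune ET z)\<^sup>*"
    using rtrancl_remove_leaf_iff reachable root_in_VT z by blast
qed

end

end

definition suppress :: "('v \<times> 'v) set \<Rightarrow> 'v \<Rightarrow> 'v \<Rightarrow> 'v \<Rightarrow> ('v \<times> 'v) set" where
  "suppress ET q p c = {e \<in> ET. fst e \<noteq> p \<and> snd e \<noteq> p} \<union> {(q, c)}"

context rtree
begin

context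
  fixes q p c assumes p: "p \<in> VT" "p \<noteq> \<rho>" and single_child: "children ET p = {c}"
    and parent: "(q, p) \<in> ET"
begin

lemma suppressed_edge: "(p, c) \<in> ET"
  using single_child unfolding children_def by blast

lemma suppressed_vertex_distinct: "q \<noteq> p" "c \<noteq> p"
  using parent suppressed_edge trancl_irrefl by blast+

lemma rtrancl_suppress_imp:
  assumes "(a, y) \<in> ET\<^sup>*" "a \<noteq> p"
  shows "(y \<noteq> p \<longrightarrow> (a, y) \<in> (suppress ET q p c)\<^sup>*) \<and> (y = p \<longrightarrow> (a, q) \<in> (suppress ET q p c)\<^sup>*)"
  using assms(1)
proof (induction rule: rtrancl_induct)
  case base then show ?case using assms(2) by simp
next
  case (step y d)
  show ?case
  proof (intro conjI impI)
    assume "d = p"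
    then show "(a, q) \<in> (suppress ET q p c)\<^sup>*"
      using step parent parent_unique suppressed_vertex_distinct by blast
  next
    assume "d \<noteq> p"
    show "(a, d) \<in> (suppress ET q p c)\<^sup>*"
    proof (cases "y = p")
      case True
      then have "d = c" using single_child step.hyps(2) unfolding children_def by blast
      then show ?thesis using step.IH True
        unfolding suppress_def by (simp add: rtrancl.rtrancl_into_rtrancl)
    next
      case False
      then have "(y, d) \<in> suppress ET q p c"
        unfolding suppress_def using \<open>d \<noteq> p\<close> step.hyps(2) by simp
      then show ?thesis using step.IH False by (simp add: rtrancl.rtrancl_into_rtrancl)
    qed
  qed
qed

lemma rtrancl_suppress_iff:
  assumes "a \<in> VT - {p}" "b \<in> VT - {p}"
  shows "(a, b) \<in> (suppress ET q p c)\<^sup>* \<longleftrightarrow> (a, b) \<in> ET\<^sup>*"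
proof
  have "suppress ET q p c \<subseteq> ET\<^sup>*"
    unfolding suppress_def using parent suppressed_edge by auto
  then show "(a, b) \<in> (suppress ET q p c)\<^sup>* \<Longrightarrow> (a, b) \<in> ET\<^sup>*"
    using rtrancl_subset_rtrancl by blast
qed (use rtrancl_suppress_imp assms in blast)

lemma children_suppress:
  assumes "v \<noteq> p"
  shows "children (suppress ET q p c) v =
    (if v = q then insert c (children ET q - {p}) else children ET v)"
proof (cases "v = q")
  case False
  then have "(v, p) \<notin> ET" using parent parent_unique by blast
  then show ?thesis unfolding children_def suppress_def using assms False by auto
qed (use assms in \<open>auto simp: children_def suppress_def\<close>)

lemma rtree_suppress: "rtree (VT - {p}) (suppress ET q p c) \<rho>"
  unfolding rtree_def rooted_tree_def
proof (intro conjI ballI impI allI)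
  show "finite (VT - {p})" "\<rho> \<in> VT - {p}" using finite_VT root_in_VT p by auto
  show "suppress ET q p c \<subseteq> (VT - {p}) \<times> (VT - {p})"
    unfolding suppress_def using edges_subset edge_in_VT parent suppressed_edge
      suppressed_vertex_distinct by auto
  fix x show "(x, \<rho>) \<notin> suppress ET q p c"
    unfolding suppress_def using root_no_parent suppressed_edge by auto
next
  fix v assume v: "v \<in> VT - {p}" "v \<noteq> \<rho>"
  then obtain x where x: "(x, v) \<in> ET" using parent_exists by blast
  show "\<exists>!x. (x, v) \<in> suppress ET q p c"
  proof (cases "v = c")
    case True
    then show ?thesis
      unfolding suppress_def using suppressed_edge parent_unique by auto
  next
    case False
    then have "x \<noteq> p" using single_child x unfolding children_def by blast
    then show ?thesis
      unfolding suppress_def using x v False parent_unique by auto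
  qed
next
  fix v assume "v \<in> VT - {p}"
  then show "(\<rho>, v) \<in> (suppress ET q p c)\<^sup>*"
    using rtrancl_suppress_iff reachable root_in_VT p by blast
qed

end

end

section \<open>Phylogenetic trees\<close>

locale phylo = rtree VT ET \<rho> for VT :: "'v set" and ET :: "('v \<times> 'v) set" and \<rho> :: 'v +
  fixes L :: "'v set"
  assumes phylo_tree: "phylo_tree VT ET \<rho> L"
begin

lemma leaves_eq: "leaves VT ET = L"
  and inner_degree: "v \<in> VT \<Longrightarrow> v \<notin> L \<Longrightarrow> v \<noteq> \<rho> \<Longrightarrow> 2 \<le> card (children ET v)"
  using phylo_tree unfolding phylo_tree_def tdeg_def by auto

lemma leaf_iff: "v \<in> L \<longleftrightarrow> v \<in> VT \<and> children ET v = {}"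
  using leaves_eq unfolding leaves_def by blast

end

lemma phylo_treeD: "phylo_tree VT ET \<rho> L \<Longrightarrow> phylo VT ET \<rho> L"
  unfolding phylo_def phylo_axioms_def rtree_def phylo_tree_def by blast

lemma phylo_treeI:
  assumes "rtree VT ET \<rho>" "\<And>v. v \<in> L \<longleftrightarrow> v \<in> VT \<and> children ET v = {}"
    and "\<And>v. v \<in> VT \<Longrightarrow> v \<notin> L \<Longrightarrow> v \<noteq> \<rho> \<Longrightarrow> 2 \<le> card (children ET v)"
  shows "phylo_tree VT ET \<rho> L"
  using assms unfolding phylo_tree_def rtree_def leaves_def tdeg_def by auto

context phylo
begin

lemma leaf_not_root: "z \<in> L \<Longrightarrow> L \<noteq> {z} \<Longrightarrow> z \<noteq> \<rho>"
  using childless_root leaf_iff by blast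

lemma parent_of_leaf_not_leaf: "(p, z) \<in> ET \<Longrightarrow> p \<notin> L"
  using leaf_iff unfolding children_def by blast

lemma child_only_of_parent: "(p, z) \<in> ET \<Longrightarrow> v \<noteq> p \<Longrightarrow> z \<notin> children ET v"
  using parent_unique unfolding children_def by blast

lemma leaf_has_sibling:
  assumes z: "z \<in> L" and "L \<noteq> {z}" and parent: "(p, z) \<in> ET"
  shows "children ET p \<noteq> {z}"
proof
  assume only_z: "children ET p = {z}"
  have p: "p \<in> VT" "p \<notin> L" using parent edge_in_VT parent_of_leaf_not_leaf by auto
  show False
  proof (cases "p = \<rho>")
    case True
    then have "VT \<subseteq> {\<rho>, z}" using root_with_leaf_child only_z z leaf_iff by blast
    then show False using assms p True leaf_iff by blast
  qed (use only_z inner_degree[OF p] in simp)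
qed

context
  fixes z p assumes z: "z \<in> L" and parent: "(p, z) \<in> ET"
    and siblings: "children ET p \<noteq> {z}" and parent_degree: "p = \<rho> \<or> 3 \<le> card (children ET p)"
begin

lemma remove_leaf_rtree: "rtree (VT - {z}) (prune ET z) \<rho>"
  using rtree_remove_leaf z leaf_iff parent root_no_parent by blast

lemma phylo_tree_remove_leaf: "phylo_tree (VT - {z}) (prune ET z) \<rho> (L - {z})"
proof (rule phylo_treeI[OF remove_leaf_rtree])
  have z_child: "z \<in> children ET p" using parent unfolding children_def by simp
  fix v
  show "v \<in> L - {z} \<longleftrightarrow> v \<in> VT - {z} \<and> children (prune ET z) v = {}"
  proof (cases "v = p")
    case True
    then show ?thesis using parent_of_leaf_not_leaf[OF parent] siblings z_child
      unfolding children_remove_leaf by auto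
  next
    case False
    then show ?thesis using child_only_of_parent[OF parent] leaf_iff
      unfolding children_remove_leaf by auto
  qed
  assume v: "v \<in> VT - {z}" "v \<notin> L - {z}" "v \<noteq> \<rho>"
  show "2 \<le> card (children (prune ET z) v)"
  proof (cases "v = p")
    case True
    then show ?thesis using parent_degree v z_child finite_children
      unfolding children_remove_leaf by simp
  next
    case False
    then show ?thesis using inner_degree v child_only_of_parent[OF parent]
      unfolding children_remove_leaf by simp
  qed
qed

lemma lca_le_remove_leaf:
  "\<forall>a\<in>L - {z}. \<forall>b\<in>L - {z}. \<forall>c\<in>L - {z}.
     lca_le VT ET a b c \<longleftrightarrow> lca_le (VT - {z}) (prune ET z) a b c"
proof (rule lca_le_subtree[OF remove_leaf_rtree rtree_axioms])
  show "(a, b) \<in> ET\<^sup>* \<longleftrightarrow> (a, b) \<in> (prune ET z)\<^sup>*" if "a \<in> VT - {z}" "b \<in> VT - {z}" for a b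
    using rtrancl_remove_leaf_iff that z leaf_iff parent root_no_parent by blast
  show "lca VT ET a b \<in> VT - {z}" if "a \<in> L - {z}" "b \<in> L - {z}" for a b
    using that lca_ne_leaf lca_in_VT leaf_iff z by auto
qed (use leaf_iff in auto)

end

text \<open>If the parent p of z has no other child than c, deleting z leaves p with a single child,
  so p has to be suppressed as well.\<close>
context
  fixes z p c q assumes z: "z \<in> L" and cherry: "children ET p = {z, c}" "c \<noteq> z"
    and p_not_root: "p \<noteq> \<rho>" and grandparent: "(q, p) \<in> ET"
begin

lemma cherry_parent: "(p, z) \<in> ET"
  and cherry_sibling: "(p, c) \<in> ET" and cherry_leaf_not_root: "z \<noteq> \<rho>"
  and cherry_parent_ne_leaf: "p \<noteq> z" and cherry_grandparent_ne_parent: "q \<noteq> p"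
  and cherry_parent_in_VT: "p \<in> VT"
  using cherry grandparent root_no_parent edge_in_VT trancl_irrefl unfolding children_def by blast+

lemma cherry_remove_rtree: "rtree (VT - {z}) (prune ET z) \<rho>"
  using rtree_remove_leaf z leaf_iff cherry_leaf_not_root by blast

lemma cherry_suppress:
  shows "rtree (VT - {z} - {p}) (suppress (prune ET z) q p c) \<rho>"
    and "\<And>a b. a \<in> VT - {z} - {p} \<Longrightarrow> b \<in> VT - {z} - {p} \<Longrightarrow>
           (a, b) \<in> (suppress (prune ET z) q p c)\<^sup>* \<longleftrightarrow> (a, b) \<in> ET\<^sup>*"
    and "\<And>v. v \<noteq> p \<Longrightarrow> children (suppress (prune ET z) q p c) v =
           (if v = q then insert c (children ET q - {p}) else children ET v)"
proof -
  have single: "children (prune ET z) p = {c}" using cherry unfolding children_remove_leaf by auto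
  have p: "p \<in> VT - {z}" "p \<noteq> \<rho>" "(q, p) \<in> prune ET z"
    using cherry_parent_in_VT cherry_parent_ne_leaf p_not_root grandparent by auto
  note suppress = rtree.rtree_suppress[OF cherry_remove_rtree p(1,2) single p(3)]
    rtree.rtrancl_suppress_iff[OF cherry_remove_rtree p(1,2) single p(3)]
    rtree.children_suppress[OF cherry_remove_rtree p(1,2) single p(3)]
  show "rtree (VT - {z} - {p}) (suppress (prune ET z) q p c) \<rho>" by (fact suppress(1))
  show "(a, b) \<in> (suppress (prune ET z) q p c)\<^sup>* \<longleftrightarrow> (a, b) \<in> ET\<^sup>*"
    if "a \<in> VT - {z} - {p}" "b \<in> VT - {z} - {p}" for a b
    using suppress(2) rtrancl_remove_leaf_iff[OF _ cherry_leaf_not_root] z leaf_iff that by auto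
  show "children (suppress (prune ET z) q p c) v =
      (if v = q then insert c (children ET q - {p}) else children ET v)" if "v \<noteq> p" for v
    using suppress(3)[OF that] child_only_of_parent[OF cherry_parent] that
      cherry_grandparent_ne_parent
    unfolding children_remove_leaf by auto
qed

lemma phylo_tree_remove_cherry_leaf:
  "phylo_tree (VT - {z} - {p}) (suppress (prune ET z) q p c) \<rho> (L - {z})"
proof (rule phylo_treeI[OF cherry_suppress(1)])
  have q_inner: "q \<notin> L" "p \<in> children ET q" using parent_of_leaf_not_leaf grandparent
    unfolding children_def by auto
  fix v
  show "v \<in> L - {z} \<longleftrightarrow> v \<in> VT - {z} - {p} \<and> children (suppress (prune ET z) q p c) v = {}"
  proof (cases "v = p \<or> v = q")
    case True
    then show ?thesis
      using cherry_suppress(3)[of q] q_inner cherry_grandparent_ne_parent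
        parent_of_leaf_not_leaf[OF cherry_parent] by auto
  next
    case False
    then show ?thesis using cherry_suppress(3)[of v] leaf_iff by auto
  qed
  assume v: "v \<in> VT - {z} - {p}" "v \<notin> L - {z}" "v \<noteq> \<rho>"
  have "c \<notin> children ET q"
    using cherry_sibling cherry_grandparent_ne_parent parent_unique unfolding children_def by blast
  moreover have "0 < card (children ET q)" using q_inner(2) finite_children card_gt_0_iff by blast
  ultimately have "card (children (suppress (prune ET z) q p c) v) = card (children ET v)"
    using cherry_suppress(3)[of v] v q_inner finite_children by (simp add: card.insert_remove)
  then show "2 \<le> card (children (suppress (prune ET z) q p c) v)" using inner_degree v by simp
qed

text \<open>Every leaf below p other than z lies below c, so p cannot be the lca of two such leaves.\<close>
lemma lca_not_cherry_parent:
  assumes "a \<in> L - {z}" "b \<in> L - {z}"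
  shows "lca VT ET a b \<noteq> p"
proof
  assume lca_p: "lca VT ET a b = p"
  have "(c, x) \<in> ET\<^sup>*" if x: "x \<in> L - {z}" "(p, x) \<in> ET\<^sup>*" for x
  proof -
    have "x \<noteq> p" using x(1) parent_of_leaf_not_leaf[OF cherry_parent] by blast
    then obtain d where "d \<in> children ET p" "(d, x) \<in> ET\<^sup>*"
      using descendant_via_child x(2) by blast
    then show ?thesis using cherry descendant_of_leaf[of z x] leaf_iff z x(1) by auto
  qed
  moreover have "(p, a) \<in> ET\<^sup>*" "(p, b) \<in> ET\<^sup>*" "c \<in> VT"
    using is_lca_lca[of a b] lca_p assms leaf_iff cherry_sibling edge_in_VT
    unfolding is_lca_def anc_le_def by auto
  ultimately have "(c, p) \<in> ET\<^sup>*"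
    using is_lca_lca[of a b] lca_p assms leaf_iff unfolding is_lca_def anc_le_def by auto
  then show False using cherry_sibling trancl_irrefl rtrancl_into_trancl2 by metis
qed

lemma lca_le_remove_cherry_leaf:
  "\<forall>x\<in>L - {z}. \<forall>y\<in>L - {z}. \<forall>y'\<in>L - {z}.
     lca_le VT ET x y y' \<longleftrightarrow> lca_le (VT - {z} - {p}) (suppress (prune ET z) q p c) x y y'"
proof (rule lca_le_subtree[OF cherry_suppress(1) rtree_axioms])
  show "(a, b) \<in> ET\<^sup>* \<longleftrightarrow> (a, b) \<in> (suppress (prune ET z) q p c)\<^sup>*"
    if "a \<in> VT - {z} - {p}" "b \<in> VT - {z} - {p}" for a b
    using cherry_suppress(2) that by blast
  show "lca VT ET a b \<in> VT - {z} - {p}" if "a \<in> L - {z}" "b \<in> L - {z}" for a b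
    using that lca_ne_leaf lca_in_VT leaf_iff z lca_not_cherry_parent by auto
qed (use leaf_iff parent_of_leaf_not_leaf[OF cherry_parent] in auto)

end

lemma phylo_tree_delete_leaf:
  assumes z: "z \<in> L" and "L \<noteq> {z}"
  obtains VT' ET' where "phylo_tree VT' ET' \<rho> (L - {z})"
    and "\<forall>x\<in>L - {z}. \<forall>y\<in>L - {z}. \<forall>y'\<in>L - {z}. lca_le VT ET x y y' \<longleftrightarrow> lca_le VT' ET' x y y'"
proof -
  have "z \<noteq> \<rho>" using leaf_not_root assms by blast
  then obtain p where parent: "(p, z) \<in> ET" using parent_exists z leaf_iff by blast
  have z_child: "z \<in> children ET p" and p: "p \<in> VT" "p \<notin> L"
    using parent edge_in_VT parent_of_leaf_not_leaf unfolding children_def by auto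
  have siblings: "children ET p \<noteq> {z}" using leaf_has_sibling assms parent by blast
  have "2 \<le> card (children ET p) \<or> p = \<rho>" using inner_degree p by force
  then consider "p = \<rho> \<or> 3 \<le> card (children ET p)" | "p \<noteq> \<rho>" "card (children ET p) = 2"
    by linarith
  then show ?thesis
  proof cases
    case 1
    then show ?thesis
      using that phylo_tree_remove_leaf[OF z parent siblings]
        lca_le_remove_leaf[OF z parent siblings]
      by blast
  next
    case 2
    then obtain c where "children ET p - {z} = {c}"
      using z_child finite_children card_1_singletonE[of "children ET p - {z}"] by auto
    then have cherry: "children ET p = {z, c}" "c \<noteq> z" using z_child by auto
    obtain q where "(q, p) \<in> ET" using parent_exists p 2(1) by blast
    then show ?thesis
      using that phylo_tree_remove_cherry_leaf[OF z cherry 2(1)]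
        lca_le_remove_cherry_leaf[OF z cherry 2(1)]
      by blast
  qed
qed

context
  fixes z assumes root_inner: "\<rho> \<notin> L" and fresh: "z \<notin> VT"
begin

lemma add_leaf_rtree: "rtree (insert z VT) (insert (\<rho>, z) ET) \<rho>"
  using rtree_add_leaf root_in_VT fresh by blast

lemma new_leaf_childless: "children (insert (\<rho>, z) ET) z = {}"
  using children_insert_edge[of \<rho> z ET z] children_outside[OF fresh] fresh root_in_VT by auto

lemma phylo_tree_add_leaf_below_root:
  "phylo_tree (insert z VT) (insert (\<rho>, z) ET) \<rho> (insert z L)"
proof (rule phylo_treeI[OF add_leaf_rtree])
  fix v
  show "v \<in> insert z L \<longleftrightarrow> v \<in> insert z VT \<and> children (insert (\<rho>, z) ET) v = {}"
    using new_leaf_childless children_insert_edge[of \<rho> z ET v] leaf_iff root_inner by auto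
  assume "v \<in> insert z VT" "v \<notin> insert z L" "v \<noteq> \<rho>"
  then show "2 \<le> card (children (insert (\<rho>, z) ET) v)"
    using inner_degree children_insert_edge[of \<rho> z ET v] by simp
qed

lemma lca_le_add_leaf_below_root:
  "\<forall>x\<in>L. \<forall>y\<in>L. \<forall>y'\<in>L. lca_le (insert z VT) (insert (\<rho>, z) ET) x y y' \<longleftrightarrow> lca_le VT ET x y y'"
proof (rule lca_le_subtree[OF rtree_axioms add_leaf_rtree])
  show "(a, b) \<in> (insert (\<rho>, z) ET)\<^sup>* \<longleftrightarrow> (a, b) \<in> ET\<^sup>*" if "a \<in> VT" "b \<in> VT" for a b
    using rtrancl_add_leaf_iff[OF root_in_VT fresh] that by blast
  show "lca (insert z VT) (insert (\<rho>, z) ET) a b \<in> VT" if "a \<in> L" "b \<in> L" for a b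
    using rtree.lca_ne_leaf[OF add_leaf_rtree new_leaf_childless]
      rtree.lca_in_VT[OF add_leaf_rtree] that leaf_iff fresh by blast
qed (use leaf_iff in auto)

lemma lca_new_leaf: "a \<in> L \<Longrightarrow> lca (insert z VT) (insert (\<rho>, z) ET) z a = \<rho>"
  using rtree.lca_leaf_child_of_root[OF add_leaf_rtree _ new_leaf_childless] leaf_iff fresh
  by blast

end

text \<open>The vertex z may occur in the tree as an inner vertex; it is renamed to a fresh one.\<close>
lemma phylo_tree_avoiding_vertex:
  assumes z: "z \<notin> L" and root_inner: "\<rho> \<notin> L" and inf: "infinite (UNIV :: 'v set)"
  obtains VT' ET' \<rho>' where "phylo_tree VT' ET' \<rho>' L" "\<rho>' \<notin> L" "z \<notin> VT'"
    and "\<forall>x\<in>L. \<forall>y\<in>L. \<forall>y'\<in>L. lca_le VT' ET' x y y' \<longleftrightarrow> lca_le VT ET x y y'"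
proof -
  obtain k where k: "k \<notin> insert z VT" using ex_new_if_finite[OF inf] finite_VT by blast
  define f where "f v = (if v = z then k else v)" for v
  have inj: "inj_on f VT" using k unfolding inj_on_def f_def by auto
  have f_L: "f ` L = L" and f_leaf: "x \<in> L \<Longrightarrow> f x = x" for x
    using z unfolding f_def by auto
  have "phylo_tree (f ` VT) (map_prod f f ` ET) (f \<rho>) L"
    using phylo_tree_image[OF phylo_tree inj] f_L by simp
  moreover have "f \<rho> \<notin> L" "z \<notin> f ` VT" using k root_inner leaf_iff unfolding f_def by auto
  moreover have "\<forall>x\<in>L. \<forall>y\<in>L. \<forall>y'\<in>L. lca_le (f ` VT) (map_prod f f ` ET) (f x) (f y) (f y')
      \<longleftrightarrow> lca_le VT ET x y y'"
  proof (rule lca_le_order_embedding[OF rtree_axioms rtree_image[OF inj] subset_refl])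
    show "L \<subseteq> VT" using leaf_iff by blast
    show "lca (f ` VT) (map_prod f f ` ET) (f a) (f b) \<in> f ` VT" if "a \<in> L" "b \<in> L" for a b
      using rtree.lca_in_VT[OF rtree_image[OF inj]] that leaf_iff by blast
  qed (fact rtrancl_image_iff[OF inj])
  ultimately show ?thesis by (intro that) (simp_all add: f_leaf)
qed

lemma phylo_tree_inner_root:
  assumes inf: "infinite (UNIV :: 'v set)"
  obtains VT' ET' \<rho>' where "phylo_tree VT' ET' \<rho>' L" "\<rho>' \<notin> L"
    and "\<forall>x\<in>L. \<forall>y\<in>L. \<forall>y'\<in>L. lca_le VT' ET' x y y' \<longleftrightarrow> lca_le VT ET x y y'"
proof (cases "\<rho> \<in> L")
  case True
  \<comment> \<open>the tree is the single leaf \<rho>; hang it below a fresh root\<close>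
  then have L: "L = {\<rho>}" using childless_root leaf_iff by auto
  obtain r where r: "r \<noteq> \<rho>" using ex_new_if_finite[OF inf, of "{\<rho>}"] by blast
  have T: "rtree (insert \<rho> {r}) (insert (r, \<rho>) {}) r"
    by (rule rtree.rtree_add_leaf[OF rtree_singleton]) (use r in auto)
  have "phylo_tree (insert \<rho> {r}) (insert (r, \<rho>) {}) r L"
    using L r by (intro phylo_treeI[OF T]) (auto simp: children_def)
  then show ?thesis by (rule that) (use L r lca_le_refl in auto)
qed (use that[OF phylo_tree] in auto)

end

lemma phylo_tree_add_leaf:
  fixes VT :: "'v set"
  assumes P: "phylo_tree VT ET \<rho> L" and z: "z \<notin> L" and inf: "infinite (UNIV :: 'v set)"
  obtains VT' ET' \<rho>' where "phylo_tree VT' ET' \<rho>' (insert z L)"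
    and "\<forall>x\<in>L. \<forall>y\<in>L. \<forall>y'\<in>L. lca_le VT' ET' x y y' \<longleftrightarrow> lca_le VT ET x y y'"
    and "\<forall>a\<in>L. lca VT' ET' z a = \<rho>'"
proof -
  obtain VT0 ET0 \<rho>0 where P0: "phylo_tree VT0 ET0 \<rho>0 L" "\<rho>0 \<notin> L"
    and lca0: "\<forall>x\<in>L. \<forall>y\<in>L. \<forall>y'\<in>L. lca_le VT0 ET0 x y y' \<longleftrightarrow> lca_le VT ET x y y'"
    using phylo.phylo_tree_inner_root[OF phylo_treeD[OF P] inf] by blast
  obtain VT1 ET1 \<rho>1 where P1: "phylo_tree VT1 ET1 \<rho>1 L" "\<rho>1 \<notin> L" "z \<notin> VT1"
    and lca1: "\<forall>x\<in>L. \<forall>y\<in>L. \<forall>y'\<in>L. lca_le VT1 ET1 x y y' \<longleftrightarrow> lca_le VT0 ET0 x y y'"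
    using phylo.phylo_tree_avoiding_vertex[OF phylo_treeD[OF P0(1)] z P0(2) inf] by blast
  interpret T1: phylo VT1 ET1 \<rho>1 L using phylo_treeD[OF P1(1)] .
  show ?thesis
  proof (rule that[OF T1.phylo_tree_add_leaf_below_root[OF P1(2,3)]])
    show "\<forall>x\<in>L. \<forall>y\<in>L. \<forall>y'\<in>L.
        lca_le (insert z VT1) (insert (\<rho>1, z) ET1) x y y' \<longleftrightarrow> lca_le VT ET x y y'"
      using T1.lca_le_add_leaf_below_root[OF P1(2,3)] lca0 lca1 by simp
  qed (simp add: T1.lca_new_leaf[OF P1(2,3)])
qed

section \<open>Joining a vertex of a new colour to every vertex\<close>

abbreviation join_edges :: "'a \<Rightarrow> 'a set \<Rightarrow> ('a \<times> 'a) set \<Rightarrow> ('a \<times> 'a) set" where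
  "join_edges x V E \<equiv> E \<union> {(x, v) | v. v \<in> V} \<union> {(v, x) | v. v \<in> V}"

lemma simple_graph_join:
  assumes "simple_graph V E" "x \<notin> V"
  shows "simple_graph (insert x V) (join_edges x V E)"
  using assms unfolding simple_graph_def sym_def irrefl_def by blast

lemma properly_colored_join_iff:
  assumes "E \<subseteq> V \<times> V" and agree: "\<forall>v\<in>V. \<sigma>' v = \<sigma> v" and new: "\<forall>v\<in>V. \<sigma>' x \<noteq> \<sigma> v"
  shows "properly_colored (insert x V) (join_edges x V E) \<sigma>' \<longleftrightarrow> properly_colored V E \<sigma>"
proof -
  have "\<sigma>' u \<noteq> \<sigma>' v \<longleftrightarrow> \<sigma> u \<noteq> \<sigma> v" if "(u, v) \<in> E" for u v
    using that assms(1) agree by auto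
  moreover have "\<sigma>' u \<noteq> \<sigma>' v" if "(u, v) \<in> join_edges x V E - E" for u v
    using that agree new by (auto simp: eq_commute)
  ultimately show ?thesis unfolding properly_colored_def by blast
qed

lemma card_colours_join:
  assumes "finite V" and agree: "\<forall>v\<in>V. \<sigma>' v = \<sigma> v" and new: "\<forall>v\<in>V. \<sigma>' x \<noteq> \<sigma> v"
  shows "card (\<sigma>' ` insert x V) = Suc (card (\<sigma> ` V))"
proof -
  have "\<sigma>' ` insert x V = insert (\<sigma>' x) (\<sigma> ` V)" using agree by auto
  moreover have "\<sigma>' x \<notin> \<sigma> ` V" using new by auto
  ultimately show ?thesis using assms(1) by simp
qed

definition explains ::
  "('a + nat) set \<Rightarrow> (('a + nat) \<times> ('a + nat)) set \<Rightarrow> 'a + nat \<Rightarrow>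
    'a set \<Rightarrow> ('a \<times> 'a) set \<Rightarrow> ('a \<Rightarrow> 'c) \<Rightarrow> bool"
  where "explains VT ET \<rho> V E \<sigma> \<longleftrightarrow> phylo_tree VT ET \<rho> (Inl ` V) \<and>
    (\<forall>u\<in>V. \<forall>v\<in>V. (u, v) \<in> E \<longleftrightarrow>
       reciprocal_best_match VT ET (Inl ` V) (case_sum \<sigma> (\<lambda>_. undefined)) (Inl u) (Inl v))"

lemma RBMG_iff_explains:
  "RBMG V E \<sigma> \<longleftrightarrow> simple_graph V E \<and> properly_colored V E \<sigma> \<and> (\<exists>VT ET \<rho>. explains VT ET \<rho> V E \<sigma>)"
  unfolding RBMG_def explains_def by blast

lemma explains_join:
  assumes T: "explains VT ET \<rho> V E \<sigma>" and "E \<subseteq> V \<times> V" "x \<notin> V"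
    and agree: "\<forall>v\<in>V. \<sigma>' v = \<sigma> v" and new: "\<forall>v\<in>V. \<sigma>' x \<noteq> \<sigma> v"
  obtains VT' ET' \<rho>' where "explains VT' ET' \<rho>' (insert x V) (join_edges x V E) \<sigma>'"
proof -
  define \<tau> \<tau>' where "\<tau> = case_sum \<sigma> (\<lambda>_ :: nat. undefined)"
    and "\<tau>' = case_sum \<sigma>' (\<lambda>_ :: nat. undefined)"
  have P: "phylo_tree VT ET \<rho> (Inl ` V)" using T unfolding explains_def by blast
  obtain VT' ET' \<rho>' where P': "phylo_tree VT' ET' \<rho>' (insert (Inl x) (Inl ` V))"
    and lca_le: "\<forall>a\<in>Inl ` V. \<forall>b\<in>Inl ` V. \<forall>c\<in>Inl ` V. lca_le VT' ET' a b c \<longleftrightarrow> lca_le VT ET a b c"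
    and lca_new: "\<forall>a\<in>Inl ` V. lca VT' ET' (Inl x) a = \<rho>'"
    using phylo_tree_add_leaf[OF P, of "Inl x"] \<open>x \<notin> V\<close> by auto
  have colours: "\<forall>a\<in>Inl ` V. \<tau>' a = \<tau> a" "\<forall>y\<in>insert (Inl x) (Inl ` V) - Inl ` V. \<tau>' y \<notin> \<tau> ` Inl ` V"
    using agree new unfolding \<tau>_def \<tau>'_def by auto
  have old: "reciprocal_best_match VT' ET' (insert (Inl x) (Inl ` V)) \<tau>' (Inl u) (Inl v) \<longleftrightarrow> (u, v) \<in> E"
    if "u \<in> V" "v \<in> V" for u v
    using reciprocal_best_match_transfer[OF subset_insertI colours lca_le] that T
    unfolding explains_def \<tau>_def by auto
  have unique: "\<forall>y\<in>insert (Inl x) (Inl ` V). \<tau>' y = \<tau>' (Inl x) \<longrightarrow> y = Inl x"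
    using agree new unfolding \<tau>'_def by fastforce
  have joined: "reciprocal_best_match VT' ET' (insert (Inl x) (Inl ` V)) \<tau>' (Inl v) (Inl x)"
    "reciprocal_best_match VT' ET' (insert (Inl x) (Inl ` V)) \<tau>' (Inl x) (Inl v)" if "v \<in> V" for v
    using reciprocal_best_match_unique_colour[OF _ _ _ unique, of "Inl v" VT' ET' \<rho>'] that lca_new
      \<open>x \<notin> V\<close> by auto
  have not_self: "\<not> reciprocal_best_match VT' ET' (insert (Inl x) (Inl ` V)) \<tau>' (Inl x) (Inl x)"
    unfolding reciprocal_best_match_def best_match_def by simp
  have edges: "(u, v) \<in> join_edges x V E \<longleftrightarrow>
      reciprocal_best_match VT' ET' (insert (Inl x) (Inl ` V)) \<tau>' (Inl u) (Inl v)"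
    if uv: "u \<in> insert x V" "v \<in> insert x V" for u v
  proof -
    consider "u = x" "v = x" | "u = x" "v \<in> V" | "u \<in> V" "v = x" | "u \<in> V" "v \<in> V"
      using uv by blast
    then show ?thesis
      by cases (use old joined not_self assms(2,3) in auto)
  qed
  have "explains VT' ET' \<rho>' (insert x V) (join_edges x V E) \<sigma>'"
    unfolding explains_def image_insert \<tau>'_def[symmetric] using P' edges by blast
  then show ?thesis by (rule that)
qed

lemma explains_remove:
  assumes T: "explains VT' ET' \<rho>' (insert x V) (join_edges x V E) \<sigma>'" and "x \<notin> V" "V \<noteq> {}"
    and agree: "\<forall>v\<in>V. \<sigma>' v = \<sigma> v" and new: "\<forall>v\<in>V. \<sigma>' x \<noteq> \<sigma> v"
  obtains VT ET where "explains VT ET \<rho>' V E \<sigma>"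
proof -
  define \<tau> \<tau>' where "\<tau> = case_sum \<sigma> (\<lambda>_ :: nat. undefined)"
    and "\<tau>' = case_sum \<sigma>' (\<lambda>_ :: nat. undefined)"
  have P': "phylo VT' ET' \<rho>' (insert (Inl x) (Inl ` V))"
    using T unfolding explains_def by (simp add: phylo_treeD)
  have leaves: "insert (Inl x) (Inl ` V) - {Inl x} = Inl ` V" "insert (Inl x) (Inl ` V) \<noteq> {Inl x}"
    using assms(2,3) by auto
  obtain VT ET where P: "phylo_tree VT ET \<rho>' (Inl ` V)"
    and lca_le: "\<forall>a\<in>Inl ` V. \<forall>b\<in>Inl ` V. \<forall>c\<in>Inl ` V. lca_le VT' ET' a b c \<longleftrightarrow> lca_le VT ET a b c"
    using phylo.phylo_tree_delete_leaf[OF P' insertI1 leaves(2)] leaves(1) by metis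
  have colours: "\<forall>a\<in>Inl ` V. \<tau>' a = \<tau> a" "\<forall>y\<in>insert (Inl x) (Inl ` V) - Inl ` V. \<tau>' y \<notin> \<tau> ` Inl ` V"
    using agree new unfolding \<tau>_def \<tau>'_def by auto
  have "reciprocal_best_match VT ET (Inl ` V) \<tau> (Inl u) (Inl v) \<longleftrightarrow> (u, v) \<in> E"
    if "u \<in> V" "v \<in> V" for u v
    using reciprocal_best_match_transfer[OF subset_insertI colours lca_le] that T assms(2)
    unfolding explains_def \<tau>'_def by auto
  then have "explains VT ET \<rho>' V E \<sigma>"
    unfolding explains_def \<tau>_def[symmetric] using P by auto
  then show ?thesis by (rule that)
qed

lemma RBMG_join:
  assumes G: "RBMG V E \<sigma>" and "x \<notin> V"
    and agree: "\<forall>v\<in>V. \<sigma>' v = \<sigma> v" and new: "\<forall>v\<in>V. \<sigma>' x \<noteq> \<sigma> v"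
  shows "RBMG (insert x V) (join_edges x V E) \<sigma>'"
proof -
  obtain VT ET \<rho> where simple: "simple_graph V E" and proper: "properly_colored V E \<sigma>"
    and T: "explains VT ET \<rho> V E \<sigma>"
    using G unfolding RBMG_iff_explains by blast
  have edges: "E \<subseteq> V \<times> V" using simple unfolding simple_graph_def by blast
  obtain VT' ET' \<rho>' where "explains VT' ET' \<rho>' (insert x V) (join_edges x V E) \<sigma>'"
    using explains_join[OF T edges \<open>x \<notin> V\<close> agree new] .
  moreover have "properly_colored (insert x V) (join_edges x V E) \<sigma>'"
    using properly_colored_join_iff[OF edges agree new] proper by blast
  ultimately show ?thesis
    unfolding RBMG_iff_explains using simple_graph_join[OF simple \<open>x \<notin> V\<close>] by blast
qed

lemma RBMG_remove:
  assumes G: "RBMG (insert x V) (join_edges x V E) \<sigma>'" and simple: "simple_graph V E"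
    and "x \<notin> V" "V \<noteq> {}" and agree: "\<forall>v\<in>V. \<sigma>' v = \<sigma> v" and new: "\<forall>v\<in>V. \<sigma>' x \<noteq> \<sigma> v"
  shows "RBMG V E \<sigma>"
proof -
  obtain VT' ET' \<rho>' where proper: "properly_colored (insert x V) (join_edges x V E) \<sigma>'"
    and T: "explains VT' ET' \<rho>' (insert x V) (join_edges x V E) \<sigma>'"
    using G unfolding RBMG_iff_explains by blast
  have edges: "E \<subseteq> V \<times> V" using simple unfolding simple_graph_def by blast
  obtain VT ET where "explains VT ET \<rho>' V E \<sigma>"
    using explains_remove[OF T \<open>x \<notin> V\<close> \<open>V \<noteq> {}\<close> agree new] .
  moreover have "properly_colored V E \<sigma>"
    using properly_colored_join_iff[OF edges agree new] proper by blast
  ultimately show ?thesis unfolding RBMG_iff_explains using simple by blast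
qed

theorem mainTheorem4:
  fixes V :: "'a set" and E :: "('a \<times> 'a) set" and \<sigma> \<sigma>' :: "'a \<Rightarrow> 'c"
    and x :: 'a and n :: nat
  assumes "n > 1"
    and "simple_graph V E"
    and "x \<notin> V"
    and "\<forall>v\<in>V. \<sigma>' v = \<sigma> v"
    and "\<forall>v\<in>V. \<sigma>' x \<noteq> \<sigma> v"
  shows "n_RBMG (n - 1) V E \<sigma> \<longleftrightarrow>
         n_RBMG n (insert x V) (E \<union> {(x, v) | v. v \<in> V} \<union> {(v, x) | v. v \<in> V}) \<sigma>'"
proof -
  have "finite V" using assms(2) unfolding simple_graph_def by blast
  note colours = card_colours_join[OF this assms(4,5)]
  show ?thesis
  proof
    assume "n_RBMG (n - 1) V E \<sigma>"
    then have "RBMG V E \<sigma>" "card (\<sigma> ` V) = n - 1" unfolding n_RBMG_def by simp_all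
    then show "n_RBMG n (insert x V) (join_edges x V E) \<sigma>'"
      unfolding n_RBMG_def using RBMG_join[OF _ assms(3-5)] colours assms(1) by simp
  next
    assume "n_RBMG n (insert x V) (join_edges x V E) \<sigma>'"
    then have G: "RBMG (insert x V) (join_edges x V E) \<sigma>'" and "card (\<sigma> ` V) = n - 1"
      unfolding n_RBMG_def colours by auto
    moreover from this(2) have "V \<noteq> {}" using assms(1) by auto
    ultimately show "n_RBMG (n - 1) V E \<sigma>"
      unfolding n_RBMG_def using RBMG_remove[OF G assms(2,3) _ assms(4,5)] by simp
  qed
qed

end
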